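(* Let $G=(V,E)$ be a network, $s,t\in V$, and $S\in[S_{min},1]$. Every optimal solution $(\pi_1,\pi_2)$ of the CO-Constrained Survivability Min-QoS problem with bound $S$ is such that all its disjoint segments are shortest disjoint segments.
   Context: A network is a directed graph $G=(V,E)$ with $M=|E|$. Each link $e$ has failure probability $p_e\in(0,p_{max}]$ with $p_{max}<1$, and positive weight $w_e$. Let $S_{min}=(1-p_{max})^M$. Paths are identified with link sets. A survivable connection is a pair $(\pi_1,\pi_2)$ of simple $s$–$t$ paths; the two paths may coincide. Its survivability level is $\prod_{e\in\pi_1\cap\pi_2}(1-p_e)$, equal to $1$ if empty. Its CO-weight is $\sum_{e\in\pi_1\cup\pi_2}w_e$. CO-CSMQ problem: minimize CO-weight subject to survivability level $\ge S$. A survivable connection is viewed as a concatenation of alternating segments: - common segments consist of links common to $\pi_1$ and $\pi_2$; - disjoint segments consist of links exclusive to one of the paths. A disjoint segment with head node $u$ and tail node $v$ is the pair formed by the subpath of $\pi_1$ from $u$ to $v$ and the subpath of $\pi_2$ from $u$ to $v$, which are link-disjoint. The weight of a disjoint segment is the total weight of its links. It is a shortest disjoint segment if its weight is minimum among all pairs of link-disjoint paths from $u$ to $v$ in $G$. *)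

theory Defs
  imports Complex_Main
begin

definition network ::
  "'v set \<Rightarrow> ('v \<times> 'v) set \<Rightarrow> ('v \<times> 'v \<Rightarrow> real) \<Rightarrow> ('v \<times> 'v \<Rightarrow> real) \<Rightarrow> real \<Rightarrow> bool" where
  "network V E p w pmax \<longleftrightarrow> finite V \<and> E \<subseteq> V \<times> V \<and> pmax < 1 \<and>
     (\<forall>e\<in>E. 0 < p e \<and> p e \<le> pmax) \<and> (\<forall>e\<in>E. 0 < w e)"

definition S_min :: "('v \<times> 'v) set \<Rightarrow> real \<Rightarrow> real" where
  "S_min E pmax = (1 - pmax) ^ card E"

definition links :: "'v list \<Rightarrow> ('v \<times> 'v) set" where
  "links xs = set (zip xs (tl xs))"

definition is_path :: "('v \<times> 'v) set \<Rightarrow> 'v \<Rightarrow> 'v \<Rightarrow> 'v list \<Rightarrow> bool" where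
  "is_path E u v xs \<longleftrightarrow> xs \<noteq> [] \<and> hd xs = u \<and> last xs = v \<and> distinct xs \<and> links xs \<subseteq> E"

definition surv_level :: "('v \<times> 'v \<Rightarrow> real) \<Rightarrow> 'v list \<Rightarrow> 'v list \<Rightarrow> real" where
  "surv_level p xs ys = (\<Prod>e\<in>links xs \<inter> links ys. 1 - p e)"

definition co_weight :: "('v \<times> 'v \<Rightarrow> real) \<Rightarrow> 'v list \<Rightarrow> 'v list \<Rightarrow> real" where
  "co_weight w xs ys = (\<Sum>e\<in>links xs \<union> links ys. w e)"

definition co_feasible ::
  "('v \<times> 'v) set \<Rightarrow> ('v \<times> 'v \<Rightarrow> real) \<Rightarrow> 'v \<Rightarrow> 'v \<Rightarrow> real \<Rightarrow> 'v list \<Rightarrow> 'v list \<Rightarrow> bool" where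
  "co_feasible E p s t S xs ys \<longleftrightarrow> is_path E s t xs \<and> is_path E s t ys \<and> S \<le> surv_level p xs ys"

definition co_optimal ::
  "('v \<times> 'v) set \<Rightarrow> ('v \<times> 'v \<Rightarrow> real) \<Rightarrow> ('v \<times> 'v \<Rightarrow> real) \<Rightarrow> 'v \<Rightarrow> 'v \<Rightarrow> real \<Rightarrow> 'v list \<Rightarrow> 'v list \<Rightarrow> bool" where
  "co_optimal E p w s t S xs ys \<longleftrightarrow> co_feasible E p s t S xs ys \<and>
     (\<forall>xs' ys'. co_feasible E p s t S xs' ys' \<longrightarrow> co_weight w xs ys \<le> co_weight w xs' ys')"

definition subpath :: "'v list \<Rightarrow> nat \<Rightarrow> nat \<Rightarrow> 'v list" where
  "subpath xs i j = take (Suc j - i) (drop i xs)"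

text \<open>Disjoint segment of (xs, ys): head u = xs!i = ys!k, tail v = xs!j = ys!l, the two
  subpaths consist only of links exclusive to their path, and the segment is maximal, i.e.
  it is delimited on each side either by s / t or by a common link (the alternating
  decomposition into common and disjoint segments).\<close>
definition is_disjoint_segment :: "'v list \<Rightarrow> 'v list \<Rightarrow> nat \<Rightarrow> nat \<Rightarrow> nat \<Rightarrow> nat \<Rightarrow> bool" where
  "is_disjoint_segment xs ys i j k l \<longleftrightarrow>
     i < j \<and> j < length xs \<and> k < l \<and> l < length ys \<and>
     xs ! i = ys ! k \<and> xs ! j = ys ! l \<and>
     links (subpath xs i j) \<inter> links ys = {} \<and>
     links (subpath ys k l) \<inter> links xs = {} \<and>
     (i = 0 \<or> (xs ! (i - 1), xs ! i) \<in> links ys) \<and>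
     (k = 0 \<or> (ys ! (k - 1), ys ! k) \<in> links xs) \<and>
     (Suc j = length xs \<or> (xs ! j, xs ! Suc j) \<in> links ys) \<and>
     (Suc l = length ys \<or> (ys ! l, ys ! Suc l) \<in> links xs)"

definition shortest_disjoint_segment ::
  "('v \<times> 'v) set \<Rightarrow> ('v \<times> 'v \<Rightarrow> real) \<Rightarrow> 'v \<Rightarrow> 'v \<Rightarrow> 'v list \<Rightarrow> 'v list \<Rightarrow> bool" where
  "shortest_disjoint_segment E w u v P1 P2 \<longleftrightarrow>
     (\<forall>Q1 Q2. is_path E u v Q1 \<and> is_path E u v Q2 \<and> links Q1 \<inter> links Q2 = {} \<longrightarrow>
        (\<Sum>e\<in>links P1 \<union> links P2. w e) \<le> (\<Sum>e\<in>links Q1 \<union> links Q2. w e))"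

end

theory Submission
  imports Defs
begin

text \<open>Let \<open>(D1, D2)\<close> be a disjoint segment of an optimal solution \<open>(\<pi>1, \<pi>2)\<close>, from \<open>u\<close> to
  \<open>v\<close>, and let \<open>(Q1, Q2)\<close> be any pair of link-disjoint \<open>u\<close>-\<open>v\<close> paths. Take the links of
  \<open>\<pi>1\<close> and \<open>\<pi>2\<close> outside the segment together with those of \<open>Q1\<close> and \<open>Q2\<close>, counting the
  links common to \<open>\<pi>1\<close> and \<open>\<pi>2\<close> twice. Every \<open>s\<close>-\<open>t\<close> cut of this multigraph is crossed
  twice, by the two prefixes up to \<open>u\<close>, by \<open>Q1\<close> and \<open>Q2\<close>, or by the two suffixes from \<open>v\<close>.
  By Menger's theorem it contains two link-disjoint walks, hence two simple \<open>s\<close>-\<open>t\<close> paths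
  that share only links common to \<open>\<pi>1\<close> and \<open>\<pi>2\<close>. This pair is feasible, and its CO-weight
  is at most that of \<open>(\<pi>1, \<pi>2)\<close> with \<open>w(D1 \<union> D2)\<close> replaced by \<open>w(Q1 \<union> Q2)\<close>, so
  optimality gives \<open>w(D1 \<union> D2) \<le> w(Q1 \<union> Q2)\<close>.\<close>

section \<open>Two edge-disjoint walks\<close>

text \<open>Edges are abstract, with endpoint maps \<open>src\<close> and \<open>dst\<close>, so that parallel edges are
  allowed.\<close>
fun walk :: "'e set \<Rightarrow> ('e \<Rightarrow> 'v) \<Rightarrow> ('e \<Rightarrow> 'v) \<Rightarrow> 'v \<Rightarrow> 'v \<Rightarrow> 'e list \<Rightarrow> bool" where
  "walk F src dst a b [] \<longleftrightarrow> a = b"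
| "walk F src dst a b (g # gs) \<longleftrightarrow> g \<in> F \<and> src g = a \<and> walk F src dst (dst g) b gs"

definition out_edges :: "'e set \<Rightarrow> ('e \<Rightarrow> 'v) \<Rightarrow> ('e \<Rightarrow> 'v) \<Rightarrow> 'v set \<Rightarrow> 'e set" where
  "out_edges F src dst X = {g \<in> F. src g \<in> X \<and> dst g \<notin> X}"

definition two_edge_connected :: "'e set \<Rightarrow> ('e \<Rightarrow> 'v) \<Rightarrow> ('e \<Rightarrow> 'v) \<Rightarrow> 'v \<Rightarrow> 'v \<Rightarrow> bool" where
  "two_edge_connected F src dst s t \<longleftrightarrow>
     (\<forall>X. s \<in> X \<and> t \<notin> X \<longrightarrow> 2 \<le> card (out_edges F src dst X))"

lemma walk_mono: "walk F src dst a b W \<Longrightarrow> F \<subseteq> G \<Longrightarrow> walk G src dst a b W"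
  by (induction W arbitrary: a) auto

lemma walk_append:
  "walk F src dst a m V \<Longrightarrow> walk F src dst m b U \<Longrightarrow> walk F src dst a b (V @ U)"
  by (induction V arbitrary: a) auto

lemma walk_edges_subset: "walk F src dst a b W \<Longrightarrow> set W \<subseteq> F"
  by (induction W arbitrary: a) auto

lemma walk_through_edge:
  "walk Fi src dst a (src g) V \<Longrightarrow> g \<in> F \<Longrightarrow> walk Fo src dst (dst g) b U \<Longrightarrow>
   Fi \<subseteq> F \<Longrightarrow> Fo \<subseteq> F \<Longrightarrow> walk F src dst a b (V @ g # U)"
  by (rule walk_append) (auto intro: walk_mono)

lemma card_ge_2_obtain:
  assumes "2 \<le> card A"
  obtains a b where "a \<in> A" "b \<in> A" "a \<noteq> b"
proof -
  from assms have "finite A" "\<not> card A \<le> Suc 0" by (auto intro: card_ge_0_finite)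
  then show ?thesis using that card_le_Suc0_iff_eq by blast
qed

lemma card_less_2_if_subset_singleton: "A \<subseteq> {a} \<Longrightarrow> card A < 2"
  using card_mono[of "{a}" A] by simp

lemma tight_cut_of_critical_edge:
  assumes "finite F" "two_edge_connected F src dst s t" "e \<in> F"
    and "\<not> two_edge_connected (F - {e}) src dst s t"
  obtains X f where "s \<in> X" "t \<notin> X" "f \<noteq> e" "out_edges F src dst X = {e, f}"
proof -
  from assms(4) obtain X where X: "s \<in> X" "t \<notin> X" "card (out_edges (F - {e}) src dst X) < 2"
    unfolding two_edge_connected_def not_all not_imp not_le by blast
  have del: "out_edges (F - {e}) src dst X = out_edges F src dst X - {e}"
    unfolding out_edges_def by auto
  have ge2: "2 \<le> card (out_edges F src dst X)"
    using assms(2) X unfolding two_edge_connected_def by auto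
  have fin: "finite (out_edges F src dst X)"
    using assms(1) unfolding out_edges_def by auto
  have "e \<in> out_edges F src dst X"
    using X(3) del ge2 by (metis Diff_empty Diff_insert0 leD)
  with X(3) del ge2 fin have "card (out_edges F src dst X) = 2"
    by (simp add: card_Diff_singleton)
  then obtain a b where "out_edges F src dst X = {a, b}" "a \<noteq> b"
    by (auto simp: card_2_iff)
  with \<open>e \<in> out_edges F src dst X\<close>
  have "out_edges F src dst X = {e, if a = e then b else a}" "(if a = e then b else a) \<noteq> e"
    by auto
  with X that show ?thesis by blast
qed

lemma walk_into_contracted_sink:
  assumes "a \<in> X" "t \<notin> X" "\<forall>g\<in>Ob. src g \<in> X"
    and "walk ({g\<in>F. src g \<in> X \<and> dst g \<in> X} \<union> Ob) src (\<lambda>g. if g \<in> Ob then t else dst g) a t W"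
  shows "\<exists>V g. W = V @ [g] \<and> g \<in> Ob \<and> walk {g\<in>F. src g \<in> X \<and> dst g \<in> X} src dst a (src g) V"
  using assms
proof (induction W arbitrary: a)
  case Nil
  then show ?case by auto
next
  case (Cons g W)
  show ?case
  proof (cases "g \<in> Ob")
    case True
    with Cons.prems have "W = []"
      by (cases W) auto
    with True Cons.prems show ?thesis by auto
  next
    case False
    with Cons.prems have g: "g \<in> F" "src g = a" "dst g \<in> X"
      and rest: "walk ({g\<in>F. src g \<in> X \<and> dst g \<in> X} \<union> Ob) src
                   (\<lambda>g. if g \<in> Ob then t else dst g) (dst g) t W"
      by auto
    from Cons.IH[OF g(3) Cons.prems(2,3) rest] obtain V h where
      "W = V @ [h]" "h \<in> Ob" "walk {g\<in>F. src g \<in> X \<and> dst g \<in> X} src dst (dst g) (src h) V"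
      by blast
    then show ?thesis
      using g Cons.prems(1) by (intro exI[of _ "g # V"] exI[of _ h]) auto
  qed
qed

lemma walk_from_contracted_source:
  assumes "s \<in> X" "s \<noteq> t" "\<forall>g\<in>Ob. dst g \<notin> X"
    and "walk ({g\<in>F. src g \<notin> X \<and> dst g \<notin> X} \<union> Ob) (\<lambda>g. if g \<in> Ob then s else src g) dst s t U"
  shows "\<exists>g U'. U = g # U' \<and> g \<in> Ob \<and> walk {g\<in>F. src g \<notin> X \<and> dst g \<notin> X} src dst (dst g) t U'"
proof -
  have outside: "walk {g\<in>F. src g \<notin> X \<and> dst g \<notin> X} src dst a t W"
    if "a \<notin> X" "walk ({g\<in>F. src g \<notin> X \<and> dst g \<notin> X} \<union> Ob) (\<lambda>g. if g \<in> Ob then s else src g) dst a t W"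
    for a W
    using that by (induction W arbitrary: a) (auto simp: \<open>s \<in> X\<close> split: if_splits)
  obtain g U' where "U = g # U'"
    using assms(2,4) by (cases U) auto
  with assms(1,3,4) show ?thesis
    by (auto split: if_splits intro: outside)
qed

text \<open>The split case of Menger's theorem: a tight cut \<open>X\<close> with edges on both sides.
  Contracting the outside of \<open>X\<close> to \<open>t\<close> (resp. the inside to \<open>s\<close>) keeps the graph
  two-edge-connected, and the two pairs of walks obtained by induction are glued along the two cut
  edges.\<close>
lemma two_edge_disjoint_walks_across_tight_cut:
  fixes F :: "'e set" and src dst :: "'e \<Rightarrow> 'v"
  assumes fin: "finite F" and conn: "two_edge_connected F src dst s t" and "s \<noteq> t"
    and X: "s \<in> X" "t \<notin> X" and cut: "out_edges F src dst X = {e, f}"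
    and g1: "g1 \<in> F" "src g1 \<notin> X" and g2: "g2 \<in> F" "dst g2 \<in> X"
    and IH: "\<And>(F' :: 'e set) (src' :: 'e \<Rightarrow> 'v) dst'. card F' < card F \<Longrightarrow> finite F' \<Longrightarrow>
        two_edge_connected F' src' dst' s t \<Longrightarrow>
        \<exists>W1 W2. walk F' src' dst' s t W1 \<and> walk F' src' dst' s t W2 \<and> set W1 \<inter> set W2 = {}"
  shows "\<exists>W1 W2. walk F src dst s t W1 \<and> walk F src dst s t W2 \<and> set W1 \<inter> set W2 = {}"
proof -
  define Ob where "Ob = {e, f}"
  define Fi where "Fi = {g\<in>F. src g \<in> X \<and> dst g \<in> X}"
  define Fo where "Fo = {g\<in>F. src g \<notin> X \<and> dst g \<notin> X}"
  define dst1 where "dst1 = (\<lambda>g. if g \<in> Ob then t else dst g)"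
  define src2 where "src2 = (\<lambda>g. if g \<in> Ob then s else src g)"
  have Ob: "Ob = out_edges F src dst X" using cut Ob_def by simp
  have ObF: "Ob \<subseteq> F" and Ob_src: "\<forall>g\<in>Ob. src g \<in> X" and Ob_dst: "\<forall>g\<in>Ob. dst g \<notin> X"
    using Ob unfolding out_edges_def by auto
  have sub: "Fi \<union> Ob \<subseteq> F" "Fo \<union> Ob \<subseteq> F" using ObF unfolding Fi_def Fo_def by auto
  have card_in: "card (Fi \<union> Ob) < card F"
    by (rule psubset_card_mono[OF fin]) (use sub g1 Ob_src in \<open>auto simp: Fi_def\<close>)
  have card_out: "card (Fo \<union> Ob) < card F"
    by (rule psubset_card_mono[OF fin]) (use sub g2 Ob_dst in \<open>auto simp: Fo_def\<close>)
  have fin': "finite (Fi \<union> Ob)" "finite (Fo \<union> Ob)" using sub fin finite_subset by auto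
  have conn_in: "two_edge_connected (Fi \<union> Ob) src dst1 s t"
    unfolding two_edge_connected_def
  proof (intro allI impI)
    fix Y assume Y: "s \<in> Y \<and> t \<notin> Y"
    have "out_edges F src dst (Y \<inter> X) \<subseteq> out_edges (Fi \<union> Ob) src dst1 Y"
      using Ob Ob_dst Y unfolding out_edges_def Fi_def dst1_def by auto
    moreover have "2 \<le> card (out_edges F src dst (Y \<inter> X))"
      using conn Y X unfolding two_edge_connected_def by auto
    moreover have "finite (out_edges (Fi \<union> Ob) src dst1 Y)"
      using fin' unfolding out_edges_def by auto
    ultimately show "2 \<le> card (out_edges (Fi \<union> Ob) src dst1 Y)"
      by (meson card_mono order_trans)
  qed
  have conn_out: "two_edge_connected (Fo \<union> Ob) src2 dst s t"
    unfolding two_edge_connected_def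
  proof (intro allI impI)
    fix Y assume Y: "s \<in> Y \<and> t \<notin> Y"
    have "out_edges F src dst (X \<union> Y) \<subseteq> out_edges (Fo \<union> Ob) src2 dst Y"
      using Ob Ob_src Y unfolding out_edges_def Fo_def src2_def by auto
    moreover have "2 \<le> card (out_edges F src dst (X \<union> Y))"
      using conn Y X unfolding two_edge_connected_def by auto
    moreover have "finite (out_edges (Fo \<union> Ob) src2 dst Y)"
      using fin' unfolding out_edges_def by auto
    ultimately show "2 \<le> card (out_edges (Fo \<union> Ob) src2 dst Y)"
      by (meson card_mono order_trans)
  qed
  obtain W1 W2 where W: "walk (Fi \<union> Ob) src dst1 s t W1" "walk (Fi \<union> Ob) src dst1 s t W2"
    "set W1 \<inter> set W2 = {}" using IH[OF card_in fin'(1) conn_in] by blast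
  obtain U1 U2 where U: "walk (Fo \<union> Ob) src2 dst s t U1" "walk (Fo \<union> Ob) src2 dst s t U2"
    "set U1 \<inter> set U2 = {}" using IH[OF card_out fin'(2) conn_out] by blast
  obtain V1 o1 where V1: "W1 = V1 @ [o1]" "o1 \<in> Ob" "walk Fi src dst s (src o1) V1"
    using walk_into_contracted_sink[OF X Ob_src, of F] W(1) unfolding Fi_def dst1_def by blast
  obtain V2 o2 where V2: "W2 = V2 @ [o2]" "o2 \<in> Ob" "walk Fi src dst s (src o2) V2"
    using walk_into_contracted_sink[OF X Ob_src, of F] W(2) unfolding Fi_def dst1_def by blast
  obtain h1 U1' where U1: "U1 = h1 # U1'" "h1 \<in> Ob" "walk Fo src dst (dst h1) t U1'"
    using walk_from_contracted_source[OF X(1) \<open>s \<noteq> t\<close> Ob_dst, of F] U(1)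
    unfolding Fo_def src2_def by blast
  obtain h2 U2' where U2: "U2 = h2 # U2'" "h2 \<in> Ob" "walk Fo src dst (dst h2) t U2'"
    using walk_from_contracted_source[OF X(1) \<open>s \<noteq> t\<close> Ob_dst, of F] U(2)
    unfolding Fo_def src2_def by blast
  have edges: "set V1 \<subseteq> Fi" "set V2 \<subseteq> Fi" "set U1' \<subseteq> Fo" "set U2' \<subseteq> Fo"
    using V1 V2 U1 U2 by (auto dest: walk_edges_subset)
  have parts_disjoint: "Fi \<inter> Fo = {}" "Fi \<inter> Ob = {}" "Fo \<inter> Ob = {}"
    using Ob_src Ob_dst unfolding Fi_def Fo_def by auto
  have "o1 \<noteq> o2" "h1 \<noteq> h2" "set V1 \<inter> set V2 = {}" "set U1' \<inter> set U2' = {}"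
    using W(3) U(3) V1 V2 U1 U2 by auto
  have FiFo: "Fi \<subseteq> F" "Fo \<subseteq> F" using sub by auto
  have glue: "walk F src dst s t (V @ g # U')"
    if "walk Fi src dst s (src g) V" "g \<in> Ob" "walk Fo src dst (dst g) t U'" for V g U'
    using walk_through_edge[OF that(1) _ that(3) FiFo] that(2) ObF by auto
  consider "o1 = h1" "o2 = h2" | "o1 = h2" "o2 = h1"
    using \<open>o1 \<noteq> o2\<close> \<open>h1 \<noteq> h2\<close> V1(2) V2(2) U1(2) U2(2) Ob_def by auto
  then show ?thesis
  proof cases
    case 1
    have "set (V1 @ o1 # U1') \<inter> set (V2 @ o2 # U2') = {}"
      using edges parts_disjoint \<open>o1 \<noteq> o2\<close> \<open>set V1 \<inter> set V2 = {}\<close> \<open>set U1' \<inter> set U2' = {}\<close>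
        V1(2) V2(2) by auto
    then show ?thesis using glue V1 V2 U1 U2 1 by metis
  next
    case 2
    have "set (V1 @ o1 # U2') \<inter> set (V2 @ o2 # U1') = {}"
      using edges parts_disjoint \<open>o1 \<noteq> o2\<close> \<open>set V1 \<inter> set V2 = {}\<close> \<open>set U1' \<inter> set U2' = {}\<close>
        V1(2) V2(2) by auto
    then show ?thesis using glue V1 V2 U1 U2 2 by metis
  qed
qed

lemma tight_cut_edge_into_sink:
  assumes conn: "two_edge_connected F src dst s t" and X: "s \<in> X" "t \<notin> X"
    and cut: "out_edges F src dst X = {e, f}" and inside: "\<forall>g\<in>F. src g \<in> X"
  shows "dst e = t"
proof (rule ccontr)
  assume "dst e \<noteq> t"
  then have "2 \<le> card (out_edges F src dst (insert (dst e) X))"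
    using conn X unfolding two_edge_connected_def by auto
  moreover have "out_edges F src dst (insert (dst e) X) \<subseteq> {f}"
  proof
    fix g assume "g \<in> out_edges F src dst (insert (dst e) X)"
    then have "g \<in> out_edges F src dst X" "g \<noteq> e"
      using inside unfolding out_edges_def by auto
    with cut show "g \<in> {f}" by auto
  qed
  ultimately show False using card_less_2_if_subset_singleton by fastforce
qed

lemma tight_cut_edge_from_source:
  assumes conn: "two_edge_connected F src dst s t" and X: "s \<in> X" "t \<notin> X"
    and cut: "out_edges F src dst X = {e, f}" and outside: "\<forall>g\<in>F. dst g \<notin> X"
  shows "src e = s"
proof (rule ccontr)
  assume "src e \<noteq> s"
  then have "2 \<le> card (out_edges F src dst (X - {src e}))"
    using conn X unfolding two_edge_connected_def by auto
  moreover have "out_edges F src dst (X - {src e}) \<subseteq> {f}"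
  proof
    fix g assume "g \<in> out_edges F src dst (X - {src e})"
    then have "g \<in> out_edges F src dst X" "g \<noteq> e"
      using outside unfolding out_edges_def by auto
    with cut show "g \<in> {f}" by auto
  qed
  ultimately show False using card_less_2_if_subset_singleton by fastforce
qed

lemma edges_to_sink_from_head:
  assumes conn: "two_edge_connected F src dst s t" and "s \<noteq> t"
    and star: "\<forall>g\<in>F. src g = s \<or> dst g = t"
    and source: "out_edges F src dst {s} \<subseteq> {e, f}" and head: "dst e \<noteq> t" "dst e \<noteq> s"
  shows "\<exists>h\<in>F. src h = dst e \<and> dst h = t \<and>
     (dst f = dst e \<longrightarrow> (\<exists>h'\<in>F. h' \<noteq> h \<and> src h' = dst e \<and> dst h' = t))"
proof -
  let ?O = "out_edges F src dst {s, dst e}"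
  have "2 \<le> card ?O" using conn head \<open>s \<noteq> t\<close> unfolding two_edge_connected_def by auto
  then obtain a b where ab: "a \<in> ?O" "b \<in> ?O" "a \<noteq> b" by (rule card_ge_2_obtain)
  have "(g = f \<and> dst f \<noteq> dst e) \<or> (g \<in> F \<and> src g = dst e \<and> dst g = t)" if "g \<in> ?O" for g
  proof (cases "src g = s")
    case True
    then have "g \<in> out_edges F src dst {s}" using that unfolding out_edges_def by auto
    then show ?thesis using source that unfolding out_edges_def by auto
  next
    case False
    then show ?thesis using that star head unfolding out_edges_def by auto
  qed
  with ab show ?thesis by metis
qed

text \<open>If every edge is critical and every tight cut is one-sided, each edge leaves \<open>s\<close> or
  enters \<open>t\<close>, and walks of length at most two suffice.\<close>
lemma two_edge_disjoint_walks_star: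
  assumes conn: "two_edge_connected F src dst s t" and "s \<noteq> t"
    and critical: "\<forall>e\<in>F. \<exists>X f. s \<in> X \<and> t \<notin> X \<and> f \<noteq> e \<and> out_edges F src dst X = {e, f}"
    and one_sided: "\<forall>e X f. e \<in> F \<longrightarrow> s \<in> X \<longrightarrow> t \<notin> X \<longrightarrow> out_edges F src dst X = {e, f} \<longrightarrow>
        (\<forall>g\<in>F. src g \<in> X) \<or> (\<forall>g\<in>F. dst g \<notin> X)"
  shows "\<exists>W1 W2. walk F src dst s t W1 \<and> walk F src dst s t W2 \<and> set W1 \<inter> set W2 = {}"
proof -
  have star: "\<forall>g\<in>F. src g = s \<or> dst g = t"
  proof
    fix g assume g: "g \<in> F"
    from critical g obtain X f where X: "s \<in> X" "t \<notin> X" "out_edges F src dst X = {g, f}"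
      by blast
    with one_sided g show "src g = s \<or> dst g = t"
      using tight_cut_edge_into_sink[OF conn X] tight_cut_edge_from_source[OF conn X] by blast
  qed
  define S0 where "S0 = out_edges F src dst {s}"
  have S0_card: "2 \<le> card S0"
    using conn \<open>s \<noteq> t\<close> unfolding two_edge_connected_def S0_def by simp
  show ?thesis
  proof (cases "\<forall>g\<in>S0. dst g = t")
    case True
    obtain g1 g2 where g: "g1 \<in> S0" "g2 \<in> S0" "g1 \<noteq> g2"
      using S0_card by (rule card_ge_2_obtain)
    with True have "walk F src dst s t [g1]" "walk F src dst s t [g2]"
      unfolding S0_def out_edges_def by auto
    with g(3) show ?thesis by (intro exI[of _ "[g1]"] exI[of _ "[g2]"]) auto
  next
    case False
    then obtain e where e: "e \<in> S0" "dst e \<noteq> t" by blast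
    then have eF: "e \<in> F" "src e = s" "dst e \<noteq> s" unfolding S0_def out_edges_def by auto
    from critical eF(1) obtain X f where
      X: "s \<in> X" "t \<notin> X" "f \<noteq> e" "out_edges F src dst X = {e, f}" by blast
    have "\<not> (\<forall>g\<in>F. src g \<in> X)" using tight_cut_edge_into_sink[OF conn X(1,2,4)] e by blast
    with one_sided eF(1) X have outside: "\<forall>g\<in>F. dst g \<notin> X" by blast
    have S0_sub: "S0 \<subseteq> {e, f}"
      using X(1,4) outside unfolding S0_def out_edges_def by blast
    have "f \<in> S0"
      using S0_sub S0_card card_less_2_if_subset_singleton[of S0 e] by fastforce
    then have fF: "f \<in> F" "src f = s" "dst f \<noteq> s" unfolding S0_def out_edges_def by auto
    obtain h where h: "h \<in> F" "src h = dst e" "dst h = t"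
      and h': "dst f = dst e \<longrightarrow> (\<exists>h'\<in>F. h' \<noteq> h \<and> src h' = dst e \<and> dst h' = t)"
      using edges_to_sink_from_head[OF conn \<open>s \<noteq> t\<close> star S0_sub[unfolded S0_def] e(2) eF(3)]
      by blast
    have walk_e: "walk F src dst s t [e, h]" using eF h by auto
    consider "dst f = t" | "dst f \<noteq> t" "dst f = dst e" | "dst f \<noteq> t" "dst f \<noteq> dst e" by blast
    then show ?thesis
    proof cases
      case 1
      then have "walk F src dst s t [f]" using fF by auto
      moreover have "set [e, h] \<inter> set [f] = {}" using X(3) h eF fF 1 by auto
      ultimately show ?thesis using walk_e by blast
    next
      case 2
      then obtain h2 where h2: "h2 \<in> F" "h2 \<noteq> h" "src h2 = dst e" "dst h2 = t" using h' by blast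
      then have "walk F src dst s t [f, h2]" using fF 2 by auto
      moreover have "set [e, h] \<inter> set [f, h2] = {}" using X(3) h h2 eF fF by auto
      ultimately show ?thesis using walk_e by blast
    next
      case 3
      have "out_edges F src dst {s} \<subseteq> {f, e}" using S0_sub S0_def by auto
      then obtain k where k: "k \<in> F" "src k = dst f" "dst k = t"
        using edges_to_sink_from_head[OF conn \<open>s \<noteq> t\<close> star _ 3(1) fF(3)] by blast
      then have "walk F src dst s t [f, k]" using fF by auto
      moreover have "set [e, h] \<inter> set [f, k] = {}" using X(3) h k eF fF 3 by auto
      ultimately show ?thesis using walk_e by blast
    qed
  qed
qed

theorem two_edge_disjoint_walks:
  fixes F :: "'e set" and src dst :: "'e \<Rightarrow> 'v"
  assumes "finite F" "two_edge_connected F src dst s t"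
  shows "\<exists>W1 W2. walk F src dst s t W1 \<and> walk F src dst s t W2 \<and> set W1 \<inter> set W2 = {}"
  using assms
proof (induction "card F" arbitrary: F src dst s t rule: less_induct)
  case less
  show ?case
  proof (cases "s = t")
    case True
    then show ?thesis by (intro exI[of _ "[]"]) auto
  next
    case st: False
    show ?thesis
    proof (cases "\<exists>e\<in>F. two_edge_connected (F - {e}) src dst s t")
      case True
      then obtain e where e: "e \<in> F" "two_edge_connected (F - {e}) src dst s t" by blast
      have "card (F - {e}) < card F" using e less.prems by (meson card_Diff1_less)
      from less.hyps[OF this _ e(2)] less.prems obtain W1 W2 where
        "walk (F - {e}) src dst s t W1" "walk (F - {e}) src dst s t W2" "set W1 \<inter> set W2 = {}"
        by auto
      then show ?thesis by (meson Diff_subset walk_mono)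
    next
      case False
      then have critical: "\<forall>e\<in>F. \<exists>X f. s \<in> X \<and> t \<notin> X \<and> f \<noteq> e \<and> out_edges F src dst X = {e, f}"
        using tight_cut_of_critical_edge[OF less.prems] by metis
      show ?thesis
      proof (cases "\<exists>e X f g1 g2. e \<in> F \<and> s \<in> X \<and> t \<notin> X \<and> out_edges F src dst X = {e, f} \<and>
                       g1 \<in> F \<and> src g1 \<notin> X \<and> g2 \<in> F \<and> dst g2 \<in> X")
        case True
        then obtain e X f g1 g2 where "s \<in> X" "t \<notin> X" "out_edges F src dst X = {e, f}"
          "g1 \<in> F" "src g1 \<notin> X" "g2 \<in> F" "dst g2 \<in> X" by blast
        from two_edge_disjoint_walks_across_tight_cut[OF less.prems st this] less.hyps
        show ?thesis by blast
      next
        case False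
        then show ?thesis
          using two_edge_disjoint_walks_star[OF less.prems(2) st critical] by blast
      qed
    qed
  qed
qed

section \<open>Link sets of vertex lists\<close>

lemma links_Nil [simp]: "links [] = {}"
  and links_singleton [simp]: "links [a] = {}"
  by (simp_all add: links_def)

lemma links_Cons_Cons [simp]: "links (a # b # xs) = insert (a, b) (links (b # xs))"
  by (simp add: links_def)

lemma finite_links [simp]: "finite (links xs)"
  by (simp add: links_def)

lemma links_conv_nth: "links xs = (\<lambda>n. (xs ! n, xs ! Suc n)) ` {..<length xs - 1}"
  unfolding links_def set_zip by (auto simp: nth_tl image_def)

lemma links_subpath:
  assumes "j < length xs"
  shows "links (subpath xs i j) = (\<lambda>n. (xs ! n, xs ! Suc n)) ` {i..<j}"
proof -
  have len: "length (subpath xs i j) - 1 = j - i"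
    using assms by (simp add: subpath_def)
  have nth: "subpath xs i j ! n = xs ! (i + n)" if "n < Suc j - i" for n
    using that assms by (simp add: subpath_def)
  have "(\<lambda>n. (subpath xs i j ! n, subpath xs i j ! Suc n)) ` {..<j - i}
      = (\<lambda>n. (xs ! n, xs ! Suc n)) ` ((+) i ` {..<j - i})"
    by (auto simp: nth image_iff)
  also have "(+) i ` {..<j - i} = {i..<j}"
  proof -
    have "x \<in> (+) i ` {..<j - i}" if "i \<le> x" "x < j" for x
      using that by (intro image_eqI[of _ _ "x - i"]) auto
    then show ?thesis by auto
  qed
  finally show ?thesis
    unfolding links_conv_nth[of "subpath xs i j"] len .
qed

lemma subpath_ends:
  assumes "i \<le> j" "j < length xs"
  shows "subpath xs i j \<noteq> []" "hd (subpath xs i j) = xs ! i" "last (subpath xs i j) = xs ! j"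
  using assms by (auto simp: subpath_def hd_drop_conv_nth last_conv_nth)

lemma links_split_at:
  assumes "i \<le> j" "j < length xs"
  shows "links xs = links (subpath xs 0 i) \<union> links (subpath xs i j) \<union> links (subpath xs j (length xs - 1))"
proof -
  have "{..<length xs - 1} = {0..<i} \<union> {i..<j} \<union> {j..<length xs - 1}"
    using assms by auto
  then show ?thesis
    using assms by (simp add: links_conv_nth[of xs] links_subpath image_Un)
qed

lemma links_subpath_disjoint:
  assumes "distinct xs" "b \<le> c" "c \<le> d" "d < length xs"
  shows "links (subpath xs a b) \<inter> links (subpath xs c d) = {}"
proof -
  have "inj_on (\<lambda>n. (xs ! n, xs ! Suc n)) {..<length xs - 1}"
    using assms(1) by (auto simp: inj_on_def nth_eq_iff_index_eq)
  then have "(\<lambda>n. (xs ! n, xs ! Suc n)) ` {a..<b} \<inter> (\<lambda>n. (xs ! n, xs ! Suc n)) ` {c..<d}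
      = (\<lambda>n. (xs ! n, xs ! Suc n)) ` ({a..<b} \<inter> {c..<d})"
    using assms by (intro inj_on_image_Int[symmetric]) auto
  with assms show ?thesis by (simp add: links_subpath)
qed

lemma link_leaving_set:
  assumes "P \<noteq> []" "hd P \<in> X" "last P \<notin> X"
  shows "\<exists>g\<in>links P. fst g \<in> X \<and> snd g \<notin> X"
  using assms
proof (induction P rule: induct_list012)
  case (3 x y zs)
  then show ?case by (cases "y \<in> X") auto
qed auto

lemma links_of_walk:
  "walk F src dst a b W \<Longrightarrow>
     last (a # map dst W) = b \<and> links (a # map dst W) = (\<lambda>g. (src g, dst g)) ` set W"
proof (induction W arbitrary: a)
  case (Cons g W)
  then show ?case by (cases W) auto
qed simp

lemma links_append_Cons: "links (as @ b # cs) = links (as @ [b]) \<union> links (b # cs)"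
  by (induction as rule: induct_list012) auto

lemma distinct_path_within:
  "P \<noteq> [] \<Longrightarrow> \<exists>Q. Q \<noteq> [] \<and> hd Q = hd P \<and> last Q = last P \<and> distinct Q \<and> links Q \<subseteq> links P"
proof (induction "length P" arbitrary: P rule: less_induct)
  case less
  show ?case
  proof (cases "distinct P")
    case False
    then obtain as y bs cs where P: "P = as @ [y] @ bs @ [y] @ cs"
      using not_distinct_decomp by blast
    define P' where "P' = as @ y # cs"
    have "length P' < length P" "P' \<noteq> []" using P P'_def by simp_all
    moreover have "hd P' = hd P" "last P' = last P"
      using P P'_def by (cases as; cases cs rule: rev_cases; simp)+
    moreover have "links P' \<subseteq> links P"
      using P P'_def links_append_Cons[of as y cs] links_append_Cons[of as y "bs @ y # cs"]
        links_append_Cons[of "y # bs" y cs] by auto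
    ultimately show ?thesis using less.hyps by fastforce
  qed (use less.prems in blast)
qed

lemma prod_superset_le:
  fixes f :: "'a \<Rightarrow> 'b :: linordered_idom"
  assumes "finite B" "A \<subseteq> B" "\<forall>e\<in>B. 0 \<le> f e \<and> f e \<le> 1"
  shows "prod f B \<le> prod f A"
proof -
  have "prod f B = prod f (B - A) * prod f A" using prod.subset_diff[OF assms(2,1)] .
  moreover have "prod f (B - A) \<le> 1" "0 \<le> prod f (B - A)" "0 \<le> prod f A"
    using assms(2,3) by (auto intro: prod_le_1 prod_nonneg)
  ultimately show ?thesis by (simp add: mult_left_le_one_le)
qed

section \<open>Exchanging a disjoint segment\<close>

text \<open>Menger's theorem on the multigraph in which every link of \<open>N\<close> is present once and every
  link of \<open>C\<close> twice: two link-disjoint walks there are two simple paths in \<open>N\<close> sharing only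
  links of \<open>C\<close>.\<close>
lemma two_paths_sharing_within:
  fixes N C :: "('v \<times> 'v) set"
  assumes "finite N"
    and cut: "\<And>X. s \<in> X \<Longrightarrow> t \<notin> X \<Longrightarrow> \<exists>g1\<in>N. \<exists>g2\<in>N.
        fst g1 \<in> X \<and> snd g1 \<notin> X \<and> fst g2 \<in> X \<and> snd g2 \<notin> X \<and> (g1 \<noteq> g2 \<or> g1 \<in> C)"
  obtains p1 p2 where "is_path N s t p1" "is_path N s t p2" "links p1 \<inter> links p2 \<subseteq> C"
proof -
  define F where "F = (\<lambda>g. (g, False)) ` N \<union> (\<lambda>g. (g, True)) ` (C \<inter> N)"
  define src :: "('v \<times> 'v) \<times> bool \<Rightarrow> 'v" where "src = fst \<circ> fst"
  define dst :: "('v \<times> 'v) \<times> bool \<Rightarrow> 'v" where "dst = snd \<circ> fst"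
  have "finite F" using \<open>finite N\<close> unfolding F_def by simp
  have conn: "two_edge_connected F src dst s t"
    unfolding two_edge_connected_def
  proof (intro allI impI)
    fix X assume "s \<in> X \<and> t \<notin> X"
    with cut obtain g1 g2 where g: "g1 \<in> N" "g2 \<in> N" "fst g1 \<in> X" "snd g1 \<notin> X"
      "fst g2 \<in> X" "snd g2 \<notin> X" "g1 \<noteq> g2 \<or> g1 \<in> C" by blast
    \<comment> \<open>if \<open>g1 = g2\<close>, its second copy is the other crossing edge\<close>
    then have "{(g1, False), (g2, g1 = g2)} \<subseteq> out_edges F src dst X"
      unfolding out_edges_def F_def src_def dst_def by auto
    moreover have "finite (out_edges F src dst X)"
      using \<open>finite F\<close> unfolding out_edges_def by simp
    moreover have "card {(g1, False), (g2, g1 = g2)} = 2"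
      by (cases "g1 = g2") auto
    ultimately show "2 \<le> card (out_edges F src dst X)"
      by (metis card_mono)
  qed
  obtain W1 W2 where
    W: "walk F src dst s t W1" "walk F src dst s t W2" "set W1 \<inter> set W2 = {}"
    using two_edge_disjoint_walks[OF \<open>finite F\<close> conn] by blast
  have src_dst: "(\<lambda>g. (src g, dst g)) = fst" unfolding src_def dst_def by auto
  have in_N: "fst ` set W1 \<subseteq> N" "fst ` set W2 \<subseteq> N"
    using walk_edges_subset[OF W(1)] walk_edges_subset[OF W(2)] unfolding F_def by auto
  have shared: "fst ` set W1 \<inter> fst ` set W2 \<subseteq> C"
  proof
    fix g assume "g \<in> fst ` set W1 \<inter> fst ` set W2"
    then obtain b1 b2 where "(g, b1) \<in> set W1" "(g, b2) \<in> set W2" by force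
    with W(3) have "(g, True) \<in> set W1 \<union> set W2" by (cases b1; cases b2) auto
    with walk_edges_subset[OF W(1)] walk_edges_subset[OF W(2)] show "g \<in> C"
      unfolding F_def by auto
  qed
  obtain q1 where q1: "q1 \<noteq> []" "hd q1 = s" "last q1 = t" "distinct q1" "links q1 \<subseteq> fst ` set W1"
    using distinct_path_within[of "s # map dst W1"] links_of_walk[OF W(1), unfolded src_dst] by auto
  obtain q2 where q2: "q2 \<noteq> []" "hd q2 = s" "last q2 = t" "distinct q2" "links q2 \<subseteq> fst ` set W2"
    using distinct_path_within[of "s # map dst W2"] links_of_walk[OF W(2), unfolded src_dst] by auto
  show ?thesis
  proof
    show "is_path N s t q1" "is_path N s t q2"
      using q1 q2 in_N unfolding is_path_def by auto
    show "links q1 \<inter> links q2 \<subseteq> C"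
      using q1(5) q2(5) shared by auto
  qed
qed

lemma is_path_mono: "is_path E u v xs \<Longrightarrow> E \<subseteq> E' \<Longrightarrow> is_path E' u v xs"
  unfolding is_path_def by auto

text \<open>Replacing a disjoint segment by a pair of link-disjoint paths with the same ends: the
  new walks need not be simple, but Menger's theorem yields simple paths that are no heavier
  and share no links beyond those common to the old paths.\<close>
lemma disjoint_segment_exchange:
  assumes w: "\<forall>e\<in>E. 0 \<le> w e"
    and xs: "is_path E s t xs" and ys: "is_path E s t ys"
    and seg: "is_disjoint_segment xs ys i j k l"
    and Q: "is_path E (xs ! i) (xs ! j) Q1" "is_path E (xs ! i) (xs ! j) Q2"
      "links Q1 \<inter> links Q2 = {}"
  obtains p1 p2 where "is_path E s t p1" "is_path E s t p2"
    "links p1 \<inter> links p2 \<subseteq> links xs \<inter> links ys"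
    "co_weight w p1 p2 + (\<Sum>e\<in>links (subpath xs i j) \<union> links (subpath ys k l). w e)
       \<le> co_weight w xs ys + (\<Sum>e\<in>links Q1 \<union> links Q2. w e)"
proof -
  define u v where "u = xs ! i" and "v = xs ! j"
  define Xp Yp where "Xp = subpath xs 0 i" and "Yp = subpath ys 0 k"
  define Xs Ys where "Xs = subpath xs j (length xs - 1)" and "Ys = subpath ys l (length ys - 1)"
  define D where "D = links (subpath xs i j) \<union> links (subpath ys k l)"
  define R where "R = links Xp \<union> links Xs \<union> links Yp \<union> links Ys"
  define QQ where "QQ = links Q1 \<union> links Q2"
  have s: "i < j" "j < length xs" "k < l" "l < length ys" "ys ! k = u" "ys ! l = v"
    "links (subpath xs i j) \<inter> links ys = {}" "links (subpath ys k l) \<inter> links xs = {}"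
    using seg unfolding is_disjoint_segment_def u_def v_def by auto
  have px: "xs \<noteq> []" "hd xs = s" "last xs = t" "distinct xs" "links xs \<subseteq> E"
    and py: "ys \<noteq> []" "hd ys = s" "last ys = t" "distinct ys" "links ys \<subseteq> E"
    using xs ys unfolding is_path_def by auto
  have split: "links xs = links Xp \<union> links (subpath xs i j) \<union> links Xs"
    "links ys = links Yp \<union> links (subpath ys k l) \<union> links Ys"
    using links_split_at[of i j xs] links_split_at[of k l ys] s
    unfolding Xp_def Xs_def Yp_def Ys_def by auto
  have "xs ! 0 = s" "ys ! 0 = s" "xs ! (length xs - 1) = t" "ys ! (length ys - 1) = t"
    using px py by (simp_all add: hd_conv_nth last_conv_nth)
  then have ends: "Xp \<noteq> []" "hd Xp = s" "last Xp = u" "Yp \<noteq> []" "hd Yp = s" "last Yp = u"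
    "Xs \<noteq> []" "hd Xs = v" "last Xs = t" "Ys \<noteq> []" "hd Ys = v" "last Ys = t"
    using subpath_ends[of 0 i xs] subpath_ends[of 0 k ys] subpath_ends[of j "length xs - 1" xs]
      subpath_ends[of l "length ys - 1" ys] s(1-6)
    unfolding Xp_def Yp_def Xs_def Ys_def u_def v_def by simp_all
  have q: "Q1 \<noteq> []" "hd Q1 = u" "last Q1 = v" "links Q1 \<subseteq> E"
    "Q2 \<noteq> []" "hd Q2 = u" "last Q2 = v" "links Q2 \<subseteq> E"
    using Q unfolding is_path_def u_def v_def by auto
  have RE: "R \<union> QQ \<subseteq> E" using split px(5) py(5) q unfolding R_def QQ_def by auto
  have crossing: "\<exists>g1\<in>R \<union> QQ. \<exists>g2\<in>R \<union> QQ. fst g1 \<in> X \<and> snd g1 \<notin> X \<and> fst g2 \<in> X \<and> snd g2 \<notin> X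
      \<and> (g1 \<noteq> g2 \<or> g1 \<in> links xs \<inter> links ys)" if "s \<in> X" "t \<notin> X" for X
  proof -
    have pair: "\<exists>g1\<in>R \<union> QQ. \<exists>g2\<in>R \<union> QQ. fst g1 \<in> X \<and> snd g1 \<notin> X \<and> fst g2 \<in> X \<and> snd g2 \<notin> X
        \<and> (g1 \<noteq> g2 \<or> g1 \<in> links xs \<inter> links ys)"
      if "P1 \<noteq> []" "P2 \<noteq> []" "hd P1 \<in> X" "hd P2 \<in> X" "last P1 \<notin> X" "last P2 \<notin> X"
        "links P1 \<union> links P2 \<subseteq> R \<union> QQ" "links P1 \<inter> links P2 \<subseteq> links xs \<inter> links ys"
      for P1 P2
      using link_leaving_set[of P1 X] link_leaving_set[of P2 X] that by blast
    consider "u \<notin> X" | "u \<in> X" "v \<notin> X" | "v \<in> X" by blast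
    then show ?thesis
    proof cases
      case 1
      then show ?thesis
        using pair[of Xp Yp] ends that split unfolding R_def by auto
    next
      case 2
      then show ?thesis
        using pair[of Q1 Q2] q Q(3) unfolding QQ_def by auto
    next
      case 3
      then show ?thesis
        using pair[of Xs Ys] ends that split unfolding R_def by auto
    qed
  qed
  obtain p1 p2 where p: "is_path (R \<union> QQ) s t p1" "is_path (R \<union> QQ) s t p2"
    "links p1 \<inter> links p2 \<subseteq> links xs \<inter> links ys"
    using two_paths_sharing_within[of "R \<union> QQ" s t "links xs \<inter> links ys"] crossing
    unfolding R_def QQ_def by auto
  have w_RQQ: "\<forall>e\<in>R \<union> QQ. 0 \<le> w e" using w RE by blast
  have fin: "finite R" "finite QQ" "finite D" unfolding R_def QQ_def D_def by simp_all
  have "co_weight w p1 p2 \<le> sum w (R \<union> QQ)"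
    using p w_RQQ fin unfolding co_weight_def is_path_def by (intro sum_mono2) auto
  also have "\<dots> \<le> sum w R + sum w QQ"
    using sum_Un[OF fin(1,2), of w] sum_nonneg[of "R \<inter> QQ" w] w_RQQ by auto
  finally have new: "co_weight w p1 p2 \<le> sum w R + sum w QQ" .
  have "links Xp \<inter> links (subpath xs i j) = {}" "links (subpath xs i j) \<inter> links Xs = {}"
    "links Yp \<inter> links (subpath ys k l) = {}" "links (subpath ys k l) \<inter> links Ys = {}"
    unfolding Xp_def Xs_def Yp_def Ys_def using s(1-4) px(4) py(4)
    by (simp_all add: links_subpath_disjoint)
  moreover have "links Xp \<union> links Xs \<subseteq> links xs" "links Yp \<union> links Ys \<subseteq> links ys"
    using split by auto
  ultimately have "R \<inter> D = {}"
    using s(7,8) unfolding R_def D_def by auto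
  moreover have "links xs \<union> links ys = R \<union> D"
    using split unfolding R_def D_def by auto
  ultimately have old: "co_weight w xs ys = sum w R + sum w D"
    unfolding co_weight_def by (simp add: sum.union_disjoint[OF fin(1,3)])
  show ?thesis
    using that[OF is_path_mono[OF p(1) RE] is_path_mono[OF p(2) RE] p(3)] new old
    unfolding D_def QQ_def by linarith
qed

lemma surv_level_antimono:
  assumes "\<forall>e\<in>links xs \<inter> links ys. 0 \<le> p e \<and> p e \<le> 1"
    and "links xs' \<inter> links ys' \<subseteq> links xs \<inter> links ys"
  shows "surv_level p xs ys \<le> surv_level p xs' ys'"
  unfolding surv_level_def using assms by (intro prod_superset_le) auto

theorem lemma3:
  fixes V :: "'v set" and E :: "('v \<times> 'v) set" and p w :: "'v \<times> 'v \<Rightarrow> real"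
    and pmax S :: real and s t :: 'v and xs ys :: "'v list" and i j k l :: nat
  assumes "network V E p w pmax"
    and "s \<in> V" and "t \<in> V"
    and "S_min E pmax \<le> S" and "S \<le> 1"
    and "co_optimal E p w s t S xs ys"
    and "is_disjoint_segment xs ys i j k l"
  shows "shortest_disjoint_segment E w (xs ! i) (xs ! j) (subpath xs i j) (subpath ys k l)"
proof -
  have w: "\<forall>e\<in>E. 0 \<le> w e" and prob: "\<forall>e\<in>E. 0 \<le> p e \<and> p e \<le> 1"
    using assms(1) unfolding network_def by force+
  have xs: "is_path E s t xs" and ys: "is_path E s t ys" and S: "S \<le> surv_level p xs ys"
    and opt: "\<And>xs' ys'. co_feasible E p s t S xs' ys' \<Longrightarrow> co_weight w xs ys \<le> co_weight w xs' ys'"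
    using assms(6) unfolding co_optimal_def co_feasible_def by auto
  show ?thesis
    unfolding shortest_disjoint_segment_def
  proof (intro allI impI, elim conjE)
    fix Q1 Q2
    assume "is_path E (xs ! i) (xs ! j) Q1" "is_path E (xs ! i) (xs ! j) Q2" "links Q1 \<inter> links Q2 = {}"
    from disjoint_segment_exchange[OF w xs ys assms(7) this]
    obtain p1 p2 where new: "is_path E s t p1" "is_path E s t p2"
        "links p1 \<inter> links p2 \<subseteq> links xs \<inter> links ys"
      and exchange: "co_weight w p1 p2 + (\<Sum>e\<in>links (subpath xs i j) \<union> links (subpath ys k l). w e)
          \<le> co_weight w xs ys + (\<Sum>e\<in>links Q1 \<union> links Q2. w e)" .
    have "surv_level p xs ys \<le> surv_level p p1 p2"
      using surv_level_antimono[OF _ new(3)] prob xs unfolding is_path_def by blast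
    with S new have "co_weight w xs ys \<le> co_weight w p1 p2"
      by (intro opt) (auto simp: co_feasible_def)
    with exchange show "(\<Sum>e\<in>links (subpath xs i j) \<union> links (subpath ys k l). w e)
        \<le> (\<Sum>e\<in>links Q1 \<union> links Q2. w e)" by linarith
  qed
qed

end
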